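(* Let $F\colon\mathbb{A}\to\mathbb{B}$ be a double functor satisfying the following three conditions. (hb3) For every square $\beta\colon(e_{FA}\,{}^{Fa}_{Fc}\,e_{FC})$ in $\mathbb{B}$ there is a unique square $\alpha\colon(e_A\,{}^{a}_{c}\,e_C)$ in $\mathbb{A}$ with $F\alpha=\beta$. (vb2) For every square $\beta\colon(Fu\,{}^{b}_{d}\,Fu')$ in $\mathbb{B}$, with $u\colon A\to A'$, $u'\colon C\to C'$ vertical in $\mathbb{A}$, there exist a square $\alpha\colon(u\,{}^{a}_{c}\,u')$ in $\mathbb{A}$ and vertically invertible squares $\psi_0\colon(e_{FA}\,{}^{b}_{Fa}\,e_{FC})$ and $\psi_1\colon(e_{FA'}\,{}^{d}_{Fc}\,e_{FC'})$ in $\mathbb{B}$ such that the vertical composite of $\psi_0$ on top of $F\alpha$ equals the vertical composite of $\beta$ on top of $\psi_1$. (vb3) For all squares $\alpha\colon(u\,{}^{a}_{c}\,u')$ and $\alpha'\colon(u\,{}^{a'}_{c'}\,u')$ in $\mathbb{A}$ and squares $\tau_0\colon(e_{FA}\,{}^{Fa}_{Fa'}\,e_{FC})$, $\tau_1\colon(e_{FA'}\,{}^{Fc}_{Fc'}\,e_{FC'})$ in $\mathbb{B}$ such that $\tau_0$ on top of $F\alpha'$ equals $F\alpha$ on top of $\tau_1$, there exist unique squares $\sigma_0\colon(e_A\,{}^{a}_{a'}\,e_C)$, $\sigma_1\colon(e_{A'}\,{}^{c}_{c'}\,e_{C'})$ in $\mathbb{A}$ with $F\sigma_0=\tau_0$,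 $F\sigma_1=\tau_1$, and $\sigma_0$ on top of $\alpha'$ equal to $\alpha$ on top of $\sigma_1$. Then for every square $\beta\colon(Fu\,{}^{Fa}_{Fc}\,Fu')$ in $\mathbb{B}$ there exists a unique square $\alpha\colon(u\,{}^{a}_{c}\,u')$ in $\mathbb{A}$ such that $F\alpha=\beta$.
   Context: A double category has objects, horizontal morphisms, vertical morphisms and squares; $\alpha\colon(u\,{}^{a}_{b}\,v)$ denotes a square with top horizontal boundary $a$, bottom horizontal boundary $b$, left vertical boundary $u$ and right vertical boundary $v$. Horizontal and vertical composition of squares are strictly associative and unital and satisfy interchange; $e_A$ is the vertical identity morphism on $A$. A square is vertically invertible if it has an inverse for vertical composition. Double functors preserve all structure strictly. *)

theory Defs
  imports Main
begin

text \<open>Conventions: all compositions are written in diagrammatic order.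
  hcomp a b = "a followed by b" for horizontal a: X -> Y, b: Y -> Z;
  vcomp u v = "u followed by v" for vertical u: X -> X', v: X' -> X''.
  A square alpha has boundaries sq_top (horizontal, from vdom(sq_left) to vdom(sq_right)),
  sq_bot (horizontal, from vcod(sq_left) to vcod(sq_right)), sq_left, sq_right (vertical).
  shcomp alpha beta = alpha to the left of beta (needs sq_right alpha = sq_left beta);
  svcomp alpha beta = alpha on top of beta (needs sq_bot alpha = sq_top beta).
  shid u = horizontal identity square on vertical u; svid a = vertical identity square
  on horizontal a, i.e. the square (e_X ^a_a e_Y).\<close>

record ('o, 'h, 'v, 's) dblcat =
  Ob :: "'o set"
  Hor :: "'h set"
  Ver :: "'v set"
  Sq :: "'s set"
  hdom :: "'h \<Rightarrow> 'o"
  hcod :: "'h \<Rightarrow> 'o"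
  vdom :: "'v \<Rightarrow> 'o"
  vcod :: "'v \<Rightarrow> 'o"
  hcomp :: "'h \<Rightarrow> 'h \<Rightarrow> 'h"
  hid :: "'o \<Rightarrow> 'h"
  vcomp :: "'v \<Rightarrow> 'v \<Rightarrow> 'v"
  vid :: "'o \<Rightarrow> 'v"
  sq_top :: "'s \<Rightarrow> 'h"
  sq_bot :: "'s \<Rightarrow> 'h"
  sq_left :: "'s \<Rightarrow> 'v"
  sq_right :: "'s \<Rightarrow> 'v"
  shcomp :: "'s \<Rightarrow> 's \<Rightarrow> 's"
  svcomp :: "'s \<Rightarrow> 's \<Rightarrow> 's"
  shid :: "'v \<Rightarrow> 's"
  svid :: "'h \<Rightarrow> 's"

definition is_sq :: "('o, 'h, 'v, 's, 'x) dblcat_scheme \<Rightarrow> 's \<Rightarrow> 'v \<Rightarrow> 'h \<Rightarrow> 'h \<Rightarrow> 'v \<Rightarrow> bool" where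
  "is_sq D \<alpha> u a c v \<longleftrightarrow> \<alpha> \<in> Sq D \<and> sq_left D \<alpha> = u \<and> sq_top D \<alpha> = a
     \<and> sq_bot D \<alpha> = c \<and> sq_right D \<alpha> = v"

definition double_category :: "('o, 'h, 'v, 's, 'x) dblcat_scheme \<Rightarrow> bool" where
  "double_category D \<longleftrightarrow>
   \<comment> \<open>horizontal category\<close>
   (\<forall>a\<in>Hor D. hdom D a \<in> Ob D \<and> hcod D a \<in> Ob D) \<and>
   (\<forall>X\<in>Ob D. hid D X \<in> Hor D \<and> hdom D (hid D X) = X \<and> hcod D (hid D X) = X) \<and>
   (\<forall>a\<in>Hor D. \<forall>b\<in>Hor D. hcod D a = hdom D b \<longrightarrow>
      hcomp D a b \<in> Hor D \<and> hdom D (hcomp D a b) = hdom D a \<and> hcod D (hcomp D a b) = hcod D b) \<and>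
   (\<forall>a\<in>Hor D. \<forall>b\<in>Hor D. \<forall>c\<in>Hor D. hcod D a = hdom D b \<longrightarrow> hcod D b = hdom D c \<longrightarrow>
      hcomp D (hcomp D a b) c = hcomp D a (hcomp D b c)) \<and>
   (\<forall>a\<in>Hor D. hcomp D (hid D (hdom D a)) a = a \<and> hcomp D a (hid D (hcod D a)) = a) \<and>
   \<comment> \<open>vertical category\<close>
   (\<forall>u\<in>Ver D. vdom D u \<in> Ob D \<and> vcod D u \<in> Ob D) \<and>
   (\<forall>X\<in>Ob D. vid D X \<in> Ver D \<and> vdom D (vid D X) = X \<and> vcod D (vid D X) = X) \<and>
   (\<forall>u\<in>Ver D. \<forall>v\<in>Ver D. vcod D u = vdom D v \<longrightarrow>
      vcomp D u v \<in> Ver D \<and> vdom D (vcomp D u v) = vdom D u \<and> vcod D (vcomp D u v) = vcod D v) \<and>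
   (\<forall>u\<in>Ver D. \<forall>v\<in>Ver D. \<forall>w\<in>Ver D. vcod D u = vdom D v \<longrightarrow> vcod D v = vdom D w \<longrightarrow>
      vcomp D (vcomp D u v) w = vcomp D u (vcomp D v w)) \<and>
   (\<forall>u\<in>Ver D. vcomp D (vid D (vdom D u)) u = u \<and> vcomp D u (vid D (vcod D u)) = u) \<and>
   \<comment> \<open>boundaries of squares\<close>
   (\<forall>\<alpha>\<in>Sq D. sq_top D \<alpha> \<in> Hor D \<and> sq_bot D \<alpha> \<in> Hor D \<and>
      sq_left D \<alpha> \<in> Ver D \<and> sq_right D \<alpha> \<in> Ver D \<and>
      hdom D (sq_top D \<alpha>) = vdom D (sq_left D \<alpha>) \<and> hcod D (sq_top D \<alpha>) = vdom D (sq_right D \<alpha>) \<and>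
      hdom D (sq_bot D \<alpha>) = vcod D (sq_left D \<alpha>) \<and> hcod D (sq_bot D \<alpha>) = vcod D (sq_right D \<alpha>)) \<and>
   \<comment> \<open>composition of squares\<close>
   (\<forall>\<alpha>\<in>Sq D. \<forall>\<beta>\<in>Sq D. sq_right D \<alpha> = sq_left D \<beta> \<longrightarrow>
      is_sq D (shcomp D \<alpha> \<beta>) (sq_left D \<alpha>) (hcomp D (sq_top D \<alpha>) (sq_top D \<beta>))
        (hcomp D (sq_bot D \<alpha>) (sq_bot D \<beta>)) (sq_right D \<beta>)) \<and>
   (\<forall>\<alpha>\<in>Sq D. \<forall>\<beta>\<in>Sq D. sq_bot D \<alpha> = sq_top D \<beta> \<longrightarrow>
      is_sq D (svcomp D \<alpha> \<beta>) (vcomp D (sq_left D \<alpha>) (sq_left D \<beta>)) (sq_top D \<alpha>)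
        (sq_bot D \<beta>) (vcomp D (sq_right D \<alpha>) (sq_right D \<beta>))) \<and>
   \<comment> \<open>identity squares\<close>
   (\<forall>u\<in>Ver D. is_sq D (shid D u) u (hid D (vdom D u)) (hid D (vcod D u)) u) \<and>
   (\<forall>a\<in>Hor D. is_sq D (svid D a) (vid D (hdom D a)) a a (vid D (hcod D a))) \<and>
   \<comment> \<open>associativity and unit laws\<close>
   (\<forall>\<alpha>\<in>Sq D. \<forall>\<beta>\<in>Sq D. \<forall>\<gamma>\<in>Sq D. sq_right D \<alpha> = sq_left D \<beta> \<longrightarrow> sq_right D \<beta> = sq_left D \<gamma> \<longrightarrow>
      shcomp D (shcomp D \<alpha> \<beta>) \<gamma> = shcomp D \<alpha> (shcomp D \<beta> \<gamma>)) \<and>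
   (\<forall>\<alpha>\<in>Sq D. \<forall>\<beta>\<in>Sq D. \<forall>\<gamma>\<in>Sq D. sq_bot D \<alpha> = sq_top D \<beta> \<longrightarrow> sq_bot D \<beta> = sq_top D \<gamma> \<longrightarrow>
      svcomp D (svcomp D \<alpha> \<beta>) \<gamma> = svcomp D \<alpha> (svcomp D \<beta> \<gamma>)) \<and>
   (\<forall>\<alpha>\<in>Sq D. shcomp D (shid D (sq_left D \<alpha>)) \<alpha> = \<alpha> \<and> shcomp D \<alpha> (shid D (sq_right D \<alpha>)) = \<alpha>) \<and>
   (\<forall>\<alpha>\<in>Sq D. svcomp D (svid D (sq_top D \<alpha>)) \<alpha> = \<alpha> \<and> svcomp D \<alpha> (svid D (sq_bot D \<alpha>)) = \<alpha>) \<and>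
   \<comment> \<open>interchange law\<close>
   (\<forall>\<alpha>\<in>Sq D. \<forall>\<beta>\<in>Sq D. \<forall>\<gamma>\<in>Sq D. \<forall>\<delta>\<in>Sq D.
      sq_right D \<alpha> = sq_left D \<beta> \<longrightarrow> sq_right D \<gamma> = sq_left D \<delta> \<longrightarrow>
      sq_bot D \<alpha> = sq_top D \<gamma> \<longrightarrow> sq_bot D \<beta> = sq_top D \<delta> \<longrightarrow>
      svcomp D (shcomp D \<alpha> \<beta>) (shcomp D \<gamma> \<delta>) = shcomp D (svcomp D \<alpha> \<gamma>) (svcomp D \<beta> \<delta>)) \<and>
   \<comment> \<open>functoriality of the identity-square assignments\<close>
   (\<forall>X\<in>Ob D. shid D (vid D X) = svid D (hid D X)) \<and>
   (\<forall>u\<in>Ver D. \<forall>v\<in>Ver D. vcod D u = vdom D v \<longrightarrow>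
      shid D (vcomp D u v) = svcomp D (shid D u) (shid D v)) \<and>
   (\<forall>a\<in>Hor D. \<forall>b\<in>Hor D. hcod D a = hdom D b \<longrightarrow>
      svid D (hcomp D a b) = shcomp D (svid D a) (svid D b))"

definition double_functor ::
  "('o, 'h, 'v, 's, 'x) dblcat_scheme \<Rightarrow> ('o2, 'h2, 'v2, 's2, 'y) dblcat_scheme \<Rightarrow>
   ('o \<Rightarrow> 'o2) \<Rightarrow> ('h \<Rightarrow> 'h2) \<Rightarrow> ('v \<Rightarrow> 'v2) \<Rightarrow> ('s \<Rightarrow> 's2) \<Rightarrow> bool" where
  "double_functor A B Fo Fh Fv Fs \<longleftrightarrow>
   (\<forall>X\<in>Ob A. Fo X \<in> Ob B) \<and>
   (\<forall>a\<in>Hor A. Fh a \<in> Hor B \<and> hdom B (Fh a) = Fo (hdom A a) \<and> hcod B (Fh a) = Fo (hcod A a)) \<and>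
   (\<forall>u\<in>Ver A. Fv u \<in> Ver B \<and> vdom B (Fv u) = Fo (vdom A u) \<and> vcod B (Fv u) = Fo (vcod A u)) \<and>
   (\<forall>\<alpha>\<in>Sq A. is_sq B (Fs \<alpha>) (Fv (sq_left A \<alpha>)) (Fh (sq_top A \<alpha>)) (Fh (sq_bot A \<alpha>)) (Fv (sq_right A \<alpha>))) \<and>
   (\<forall>a\<in>Hor A. \<forall>b\<in>Hor A. hcod A a = hdom A b \<longrightarrow> Fh (hcomp A a b) = hcomp B (Fh a) (Fh b)) \<and>
   (\<forall>X\<in>Ob A. Fh (hid A X) = hid B (Fo X)) \<and>
   (\<forall>u\<in>Ver A. \<forall>v\<in>Ver A. vcod A u = vdom A v \<longrightarrow> Fv (vcomp A u v) = vcomp B (Fv u) (Fv v)) \<and>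
   (\<forall>X\<in>Ob A. Fv (vid A X) = vid B (Fo X)) \<and>
   (\<forall>\<alpha>\<in>Sq A. \<forall>\<beta>\<in>Sq A. sq_right A \<alpha> = sq_left A \<beta> \<longrightarrow> Fs (shcomp A \<alpha> \<beta>) = shcomp B (Fs \<alpha>) (Fs \<beta>)) \<and>
   (\<forall>\<alpha>\<in>Sq A. \<forall>\<beta>\<in>Sq A. sq_bot A \<alpha> = sq_top A \<beta> \<longrightarrow> Fs (svcomp A \<alpha> \<beta>) = svcomp B (Fs \<alpha>) (Fs \<beta>)) \<and>
   (\<forall>u\<in>Ver A. Fs (shid A u) = shid B (Fv u)) \<and>
   (\<forall>a\<in>Hor A. Fs (svid A a) = svid B (Fh a))"

definition vert_invertible :: "('o, 'h, 'v, 's, 'x) dblcat_scheme \<Rightarrow> 's \<Rightarrow> bool" where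
  "vert_invertible D \<psi> \<longleftrightarrow> \<psi> \<in> Sq D \<and>
     (\<exists>\<phi>\<in>Sq D. sq_bot D \<psi> = sq_top D \<phi> \<and> sq_bot D \<phi> = sq_top D \<psi> \<and>
        svcomp D \<psi> \<phi> = svid D (sq_top D \<psi>) \<and> svcomp D \<phi> \<psi> = svid D (sq_bot D \<psi>))"

end

theory Submission
  imports Defs
begin

text \<open>Existence: by (vb2), \<open>\<beta>\<close> agrees with some \<open>F \<alpha>'\<close> up to vertically invertible globular
  squares \<open>\<psi>\<^sub>0\<close> on top and \<open>\<psi>\<^sub>1\<close> at the bottom. Lifting \<open>\<psi>\<^sub>0\<close> and the inverse of \<open>\<psi>\<^sub>1\<close>
  along (hb3) and pasting them onto \<open>\<alpha>'\<close> gives a square over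
  \<open>\<psi>\<^sub>0 ; F \<alpha>' ; \<psi>\<^sub>1\<^sup>-\<^sup>1 = \<beta>\<close>.
  Uniqueness: if \<open>F \<alpha>\<^sub>1 = F \<alpha>\<^sub>2\<close>, apply (vb3) to the identity comparison between them; its lifts
  lie over identities, hence are identities by the uniqueness in (hb3), and the resulting
  equation \<open>id ; \<alpha>\<^sub>2 = \<alpha>\<^sub>1 ; id\<close> is \<open>\<alpha>\<^sub>1 = \<alpha>\<^sub>2\<close>.\<close>

lemma
  assumes "double_category D" "X \<in> Ob D"
  shows vdom_vid: "vdom D (vid D X) = X"
    and vcod_vid: "vcod D (vid D X) = X"
  using assms unfolding double_category_def by auto

lemma
  assumes "double_category D" "u \<in> Ver D"
  shows vcod_in_Ob: "vcod D u \<in> Ob D"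
    and vcomp_vid_left: "vcomp D (vid D (vdom D u)) u = u"
    and vcomp_vid_right: "vcomp D u (vid D (vcod D u)) = u"
  using assms unfolding double_category_def by auto

lemma
  assumes "double_category D" "is_sq D \<alpha> u a c v"
  shows is_sq_top_in_Hor: "a \<in> Hor D"
    and is_sq_bot_in_Hor: "c \<in> Hor D"
    and is_sq_left_in_Ver: "u \<in> Ver D"
    and is_sq_right_in_Ver: "v \<in> Ver D"
    and is_sq_hdom_top: "hdom D a = vdom D u"
    and is_sq_hcod_top: "hcod D a = vdom D v"
    and is_sq_hdom_bot: "hdom D c = vcod D u"
    and is_sq_hcod_bot: "hcod D c = vcod D v"
  using assms unfolding double_category_def is_sq_def by auto

lemma is_sq_svid:
  assumes "double_category D" "a \<in> Hor D"
  shows "is_sq D (svid D a) (vid D (hdom D a)) a a (vid D (hcod D a))"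
  using assms unfolding double_category_def by auto

lemma is_sq_svcomp:
  assumes "double_category D" "is_sq D \<alpha> u a b v" "is_sq D \<beta> u' b c v'"
  shows "is_sq D (svcomp D \<alpha> \<beta>) (vcomp D u u') a c (vcomp D v v')"
  using assms unfolding double_category_def is_sq_def by metis

lemma svcomp_assoc:
  assumes "double_category D" "is_sq D \<alpha> u a b v" "is_sq D \<beta> u' b c v'" "is_sq D \<gamma> u'' c d v''"
  shows "svcomp D (svcomp D \<alpha> \<beta>) \<gamma> = svcomp D \<alpha> (svcomp D \<beta> \<gamma>)"
  using assms unfolding double_category_def is_sq_def by metis

lemma
  assumes "double_category D" "is_sq D \<alpha> u a c v"
  shows svcomp_svid_left: "svcomp D (svid D a) \<alpha> = \<alpha>"
    and svcomp_svid_right: "svcomp D \<alpha> (svid D c) = \<alpha>"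
  using assms unfolding double_category_def is_sq_def by auto

lemma is_sq_svcomp_globular_top:
  assumes D: "double_category D"
    and \<sigma>: "is_sq D \<sigma> (vid D (vdom D u)) a b (vid D (vdom D v))"
    and \<alpha>: "is_sq D \<alpha> u b c v"
  shows "is_sq D (svcomp D \<sigma> \<alpha>) u a c v"
  using is_sq_svcomp[OF D \<sigma> \<alpha>]
  by (simp add: vcomp_vid_left D is_sq_left_in_Ver[OF D \<alpha>] is_sq_right_in_Ver[OF D \<alpha>])

lemma is_sq_svcomp_globular_bot:
  assumes D: "double_category D"
    and \<alpha>: "is_sq D \<alpha> u a b v"
    and \<sigma>: "is_sq D \<sigma> (vid D (vcod D u)) b c (vid D (vcod D v))"
  shows "is_sq D (svcomp D \<alpha> \<sigma>) u a c v"
  using is_sq_svcomp[OF D \<alpha> \<sigma>]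
  by (simp add: vcomp_vid_right D is_sq_left_in_Ver[OF D \<alpha>] is_sq_right_in_Ver[OF D \<alpha>])

text \<open>The vertical sides of the inverse are forced to be identities by comparing
  the vertical sides of \<open>\<phi> ; \<psi>\<close> with those of \<open>svid d\<close>.\<close>

lemma globular_vert_inverse:
  assumes D: "double_category D" and X: "X \<in> Ob D" and Y: "Y \<in> Ob D"
    and \<psi>: "is_sq D \<psi> (vid D X) b d (vid D Y)" and inv: "vert_invertible D \<psi>"
  obtains \<phi> where "is_sq D \<phi> (vid D X) d b (vid D Y)" and "svcomp D \<psi> \<phi> = svid D b"
proof -
  obtain \<phi> where "\<phi> \<in> Sq D" and tb: "sq_top D \<phi> = d" "sq_bot D \<phi> = b"
    and right_inv: "svcomp D \<psi> \<phi> = svid D b" and left_inv: "svcomp D \<phi> \<psi> = svid D d"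
    using inv \<psi> unfolding vert_invertible_def is_sq_def by auto
  define l r where "l = sq_left D \<phi>" and "r = sq_right D \<phi>"
  have \<phi>: "is_sq D \<phi> l d b r"
    using \<open>\<phi> \<in> Sq D\<close> tb unfolding is_sq_def l_def r_def by simp
  have "vcod D l = X" "vcod D r = Y"
    using is_sq_hdom_bot[OF D \<phi>] is_sq_hcod_bot[OF D \<phi>]
      is_sq_hdom_top[OF D \<psi>] is_sq_hcod_top[OF D \<psi>] vdom_vid[OF D] X Y by simp_all
  then have "is_sq D (svid D d) l d d r"
    using is_sq_svcomp[OF D \<phi> \<psi>] left_inv vcomp_vid_right[OF D]
      is_sq_left_in_Ver[OF D \<phi>] is_sq_right_in_Ver[OF D \<phi>] by metis
  moreover have "is_sq D (svid D d) (vid D X) d d (vid D Y)"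
    using is_sq_svid[OF D is_sq_bot_in_Hor[OF D \<psi>]]
      is_sq_hdom_bot[OF D \<psi>] is_sq_hcod_bot[OF D \<psi>] vcod_vid[OF D] X Y by simp
  ultimately have "l = vid D X" "r = vid D Y"
    unfolding is_sq_def by auto
  with \<phi> right_inv show thesis using that by simp
qed

lemma double_functor_Ob:
  "double_functor A B Fo Fh Fv Fs \<Longrightarrow> X \<in> Ob A \<Longrightarrow> Fo X \<in> Ob B"
  unfolding double_functor_def by blast

lemma
  assumes "double_functor A B Fo Fh Fv Fs" "a \<in> Hor A"
  shows double_functor_Hor: "Fh a \<in> Hor B"
    and double_functor_hdom: "hdom B (Fh a) = Fo (hdom A a)"
    and double_functor_hcod: "hcod B (Fh a) = Fo (hcod A a)"
  using assms unfolding double_functor_def by auto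

lemma double_functor_is_sq:
  assumes "double_functor A B Fo Fh Fv Fs" "is_sq A \<alpha> u a c v"
  shows "is_sq B (Fs \<alpha>) (Fv u) (Fh a) (Fh c) (Fv v)"
  using assms unfolding double_functor_def is_sq_def by blast

lemma double_functor_svcomp:
  assumes "double_functor A B Fo Fh Fv Fs" "is_sq A \<alpha> u a b v" "is_sq A \<beta> u' b c v'"
  shows "Fs (svcomp A \<alpha> \<beta>) = svcomp B (Fs \<alpha>) (Fs \<beta>)"
  using assms unfolding double_functor_def is_sq_def by metis

lemma double_functor_svid:
  "double_functor A B Fo Fh Fv Fs \<Longrightarrow> a \<in> Hor A \<Longrightarrow> Fs (svid A a) = svid B (Fh a)"
  unfolding double_functor_def by blast

lemma is_sq_svid_image:
  assumes "double_category B" "double_functor A B Fo Fh Fv Fs" "a \<in> Hor A"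
  shows "is_sq B (svid B (Fh a)) (vid B (Fo (hdom A a))) (Fh a) (Fh a) (vid B (Fo (hcod A a)))"
  using is_sq_svid[OF assms(1) double_functor_Hor[OF assms(2,3)]]
  by (simp add: double_functor_hdom[OF assms(2,3)] double_functor_hcod[OF assms(2,3)])

definition globular_fully_faithful ::
  "('o, 'h, 'v, 's, 'x) dblcat_scheme \<Rightarrow> ('o2, 'h2, 'v2, 's2, 'y) dblcat_scheme \<Rightarrow>
   ('o \<Rightarrow> 'o2) \<Rightarrow> ('h \<Rightarrow> 'h2) \<Rightarrow> ('v \<Rightarrow> 'v2) \<Rightarrow> ('s \<Rightarrow> 's2) \<Rightarrow> bool" where
  "globular_fully_faithful AA BB Fo Fh Fv Fs \<longleftrightarrow>
    (\<forall>a\<in>Hor AA. \<forall>c\<in>Hor AA. \<forall>\<beta>.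
        hdom AA c = hdom AA a \<longrightarrow> hcod AA c = hcod AA a \<longrightarrow>
        is_sq BB \<beta> (vid BB (Fo (hdom AA a))) (Fh a) (Fh c) (vid BB (Fo (hcod AA a))) \<longrightarrow>
        (\<exists>!\<alpha>. is_sq AA \<alpha> (vid AA (hdom AA a)) a c (vid AA (hcod AA a)) \<and> Fs \<alpha> = \<beta>))"

definition squares_lift_up_to_globular_iso ::
  "('o, 'h, 'v, 's, 'x) dblcat_scheme \<Rightarrow> ('o2, 'h2, 'v2, 's2, 'y) dblcat_scheme \<Rightarrow>
   ('o \<Rightarrow> 'o2) \<Rightarrow> ('h \<Rightarrow> 'h2) \<Rightarrow> ('v \<Rightarrow> 'v2) \<Rightarrow> ('s \<Rightarrow> 's2) \<Rightarrow> bool" where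
  "squares_lift_up_to_globular_iso AA BB Fo Fh Fv Fs \<longleftrightarrow>
    (\<forall>u\<in>Ver AA. \<forall>u'\<in>Ver AA. \<forall>b d \<beta>.
        is_sq BB \<beta> (Fv u) b d (Fv u') \<longrightarrow>
        (\<exists>a c \<alpha> \<psi>0 \<psi>1. is_sq AA \<alpha> u a c u'
            \<and> is_sq BB \<psi>0 (vid BB (Fo (vdom AA u))) b (Fh a) (vid BB (Fo (vdom AA u')))
            \<and> vert_invertible BB \<psi>0
            \<and> is_sq BB \<psi>1 (vid BB (Fo (vcod AA u))) d (Fh c) (vid BB (Fo (vcod AA u')))
            \<and> vert_invertible BB \<psi>1
            \<and> svcomp BB \<psi>0 (Fs \<alpha>) = svcomp BB \<beta> \<psi>1))"

definition globular_comparisons_lift ::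
  "('o, 'h, 'v, 's, 'x) dblcat_scheme \<Rightarrow> ('o2, 'h2, 'v2, 's2, 'y) dblcat_scheme \<Rightarrow>
   ('o \<Rightarrow> 'o2) \<Rightarrow> ('h \<Rightarrow> 'h2) \<Rightarrow> ('v \<Rightarrow> 'v2) \<Rightarrow> ('s \<Rightarrow> 's2) \<Rightarrow> bool" where
  "globular_comparisons_lift AA BB Fo Fh Fv Fs \<longleftrightarrow>
    (\<forall>u u' a c a' c' \<alpha> \<alpha>' \<tau>0 \<tau>1.
        is_sq AA \<alpha> u a c u' \<longrightarrow> is_sq AA \<alpha>' u a' c' u' \<longrightarrow>
        is_sq BB \<tau>0 (vid BB (Fo (vdom AA u))) (Fh a) (Fh a') (vid BB (Fo (vdom AA u'))) \<longrightarrow>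
        is_sq BB \<tau>1 (vid BB (Fo (vcod AA u))) (Fh c) (Fh c') (vid BB (Fo (vcod AA u'))) \<longrightarrow>
        svcomp BB \<tau>0 (Fs \<alpha>') = svcomp BB (Fs \<alpha>) \<tau>1 \<longrightarrow>
        (\<exists>!\<sigma>. is_sq AA (fst \<sigma>) (vid AA (vdom AA u)) a a' (vid AA (vdom AA u'))
            \<and> is_sq AA (snd \<sigma>) (vid AA (vcod AA u)) c c' (vid AA (vcod AA u'))
            \<and> Fs (fst \<sigma>) = \<tau>0 \<and> Fs (snd \<sigma>) = \<tau>1
            \<and> svcomp AA (fst \<sigma>) \<alpha>' = svcomp AA \<alpha> (snd \<sigma>)))"

lemma globular_lift_exists:
  assumes "globular_fully_faithful AA BB Fo Fh Fv Fs" "a \<in> Hor AA" "c \<in> Hor AA"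
    "hdom AA c = hdom AA a" "hcod AA c = hcod AA a"
    "is_sq BB \<beta> (vid BB (Fo (hdom AA a))) (Fh a) (Fh c) (vid BB (Fo (hcod AA a)))"
  obtains \<alpha> where "is_sq AA \<alpha> (vid AA (hdom AA a)) a c (vid AA (hcod AA a))" "Fs \<alpha> = \<beta>"
  using assms unfolding globular_fully_faithful_def by blast

lemma globular_lift_of_svid:
  assumes dA: "double_category AA" and dB: "double_category BB"
    and F: "double_functor AA BB Fo Fh Fv Fs"
    and ff: "globular_fully_faithful AA BB Fo Fh Fv Fs" and a: "a \<in> Hor AA"
    and \<sigma>: "is_sq AA \<sigma> (vid AA (hdom AA a)) a a (vid AA (hcod AA a))"
    and F\<sigma>: "Fs \<sigma> = svid BB (Fh a)"
  shows "\<sigma> = svid AA a"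
  using ff is_sq_svid_image[OF dB F a] a is_sq_svid[OF dA a] \<sigma> F\<sigma> double_functor_svid[OF F a]
  unfolding globular_fully_faithful_def by blast

lemma square_lift_unique:
  assumes dA: "double_category AA" and dB: "double_category BB"
    and F: "double_functor AA BB Fo Fh Fv Fs"
    and ff: "globular_fully_faithful AA BB Fo Fh Fv Fs"
    and cl: "globular_comparisons_lift AA BB Fo Fh Fv Fs"
    and \<alpha>1: "is_sq AA \<alpha>1 u a c u'" and \<alpha>2: "is_sq AA \<alpha>2 u a c u'"
    and eq: "Fs \<alpha>1 = Fs \<alpha>2"
  shows "\<alpha>1 = \<alpha>2"
proof -
  have a: "a \<in> Hor AA" and c: "c \<in> Hor AA"
    using is_sq_top_in_Hor[OF dA \<alpha>1] is_sq_bot_in_Hor[OF dA \<alpha>1] .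
  note bnd = is_sq_hdom_top[OF dA \<alpha>1] is_sq_hcod_top[OF dA \<alpha>1]
    is_sq_hdom_bot[OF dA \<alpha>1] is_sq_hcod_bot[OF dA \<alpha>1]
  have "svcomp BB (svid BB (Fh a)) (Fs \<alpha>2) = svcomp BB (Fs \<alpha>1) (svid BB (Fh c))"
    using svcomp_svid_left[OF dB double_functor_is_sq[OF F \<alpha>2]]
      svcomp_svid_right[OF dB double_functor_is_sq[OF F \<alpha>1]] eq by simp
  then obtain \<sigma>0 \<sigma>1
    where \<sigma>0: "is_sq AA \<sigma>0 (vid AA (hdom AA a)) a a (vid AA (hcod AA a))" "Fs \<sigma>0 = svid BB (Fh a)"
      and \<sigma>1: "is_sq AA \<sigma>1 (vid AA (hdom AA c)) c c (vid AA (hcod AA c))" "Fs \<sigma>1 = svid BB (Fh c)"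
      and comm: "svcomp AA \<sigma>0 \<alpha>2 = svcomp AA \<alpha>1 \<sigma>1"
    using cl \<alpha>1 \<alpha>2 is_sq_svid_image[OF dB F a] is_sq_svid_image[OF dB F c] bnd
    unfolding globular_comparisons_lift_def by (metis (no_types, lifting))
  have "\<sigma>0 = svid AA a" "\<sigma>1 = svid AA c"
    using globular_lift_of_svid[OF dA dB F ff a \<sigma>0] globular_lift_of_svid[OF dA dB F ff c \<sigma>1] .
  then show ?thesis
    using comm svcomp_svid_left[OF dA \<alpha>2] svcomp_svid_right[OF dA \<alpha>1] by simp
qed

lemma square_lift_exists:
  assumes dA: "double_category AA" and dB: "double_category BB"
    and F: "double_functor AA BB Fo Fh Fv Fs"
    and ff: "globular_fully_faithful AA BB Fo Fh Fv Fs"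
    and lift: "squares_lift_up_to_globular_iso AA BB Fo Fh Fv Fs"
    and u: "u \<in> Ver AA" and u': "u' \<in> Ver AA" and a: "a \<in> Hor AA" and c: "c \<in> Hor AA"
    and bnd: "hdom AA a = vdom AA u" "hcod AA a = vdom AA u'"
      "hdom AA c = vcod AA u" "hcod AA c = vcod AA u'"
    and \<beta>: "is_sq BB \<beta> (Fv u) (Fh a) (Fh c) (Fv u')"
  obtains \<alpha> where "is_sq AA \<alpha> u a c u'" and "Fs \<alpha> = \<beta>"
proof -
  obtain a' c' \<alpha>' \<psi>0 \<psi>1 where \<alpha>': "is_sq AA \<alpha>' u a' c' u'"
    and \<psi>0: "is_sq BB \<psi>0 (vid BB (Fo (vdom AA u))) (Fh a) (Fh a') (vid BB (Fo (vdom AA u')))"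
    and \<psi>1: "is_sq BB \<psi>1 (vid BB (Fo (vcod AA u))) (Fh c) (Fh c') (vid BB (Fo (vcod AA u')))"
    and inv1: "vert_invertible BB \<psi>1"
    and comm: "svcomp BB \<psi>0 (Fs \<alpha>') = svcomp BB \<beta> \<psi>1"
    using lift u u' \<beta> unfolding squares_lift_up_to_globular_iso_def by blast
  obtain \<phi> where \<phi>: "is_sq BB \<phi> (vid BB (Fo (vcod AA u))) (Fh c') (Fh c) (vid BB (Fo (vcod AA u')))"
    and \<psi>1\<phi>: "svcomp BB \<psi>1 \<phi> = svid BB (Fh c)"
    using globular_vert_inverse[OF dB _ _ \<psi>1 inv1] double_functor_Ob[OF F]
      vcod_in_Ob[OF dA u] vcod_in_Ob[OF dA u'] by blast
  note bnd' = is_sq_hdom_top[OF dA \<alpha>'] is_sq_hcod_top[OF dA \<alpha>']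
    is_sq_hdom_bot[OF dA \<alpha>'] is_sq_hcod_bot[OF dA \<alpha>']
  obtain \<sigma>0 where \<sigma>0: "is_sq AA \<sigma>0 (vid AA (vdom AA u)) a a' (vid AA (vdom AA u'))" "Fs \<sigma>0 = \<psi>0"
    using globular_lift_exists[OF ff a is_sq_top_in_Hor[OF dA \<alpha>']] \<psi>0 bnd bnd' by auto
  obtain \<sigma>1 where \<sigma>1: "is_sq AA \<sigma>1 (vid AA (vcod AA u)) c' c (vid AA (vcod AA u'))" "Fs \<sigma>1 = \<phi>"
    using globular_lift_exists[OF ff is_sq_bot_in_Hor[OF dA \<alpha>'] c] \<phi> bnd bnd' by auto
  have \<sigma>0\<alpha>': "is_sq AA (svcomp AA \<sigma>0 \<alpha>') u a c' u'"
    using is_sq_svcomp_globular_top[OF dA \<sigma>0(1) \<alpha>'] .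
  have "Fs (svcomp AA (svcomp AA \<sigma>0 \<alpha>') \<sigma>1) = svcomp BB (svcomp BB \<psi>0 (Fs \<alpha>')) \<phi>"
    using double_functor_svcomp[OF F \<sigma>0\<alpha>' \<sigma>1(1)] double_functor_svcomp[OF F \<sigma>0(1) \<alpha>'] \<sigma>0(2) \<sigma>1(2)
    by simp
  also have "\<dots> = svcomp BB \<beta> (svcomp BB \<psi>1 \<phi>)"
    using comm svcomp_assoc[OF dB \<beta> \<psi>1 \<phi>] by simp
  also have "\<dots> = \<beta>"
    using \<psi>1\<phi> svcomp_svid_right[OF dB \<beta>] by simp
  finally show thesis
    using that is_sq_svcomp_globular_bot[OF dA \<sigma>0\<alpha>' \<sigma>1(1)] by blast
qed

theorem lemma5p3:
  fixes AA :: "('o, 'h, 'v, 's, 'x) dblcat_scheme"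
    and BB :: "('o2, 'h2, 'v2, 's2, 'y) dblcat_scheme"
    and Fo :: "'o \<Rightarrow> 'o2" and Fh :: "'h \<Rightarrow> 'h2" and Fv :: "'v \<Rightarrow> 'v2" and Fs :: "'s \<Rightarrow> 's2"
  assumes dA: "double_category AA"
    and dB: "double_category BB"
    and F: "double_functor AA BB Fo Fh Fv Fs"
    and hb3: "\<forall>a\<in>Hor AA. \<forall>c\<in>Hor AA. \<forall>\<beta>.
        hdom AA c = hdom AA a \<longrightarrow> hcod AA c = hcod AA a \<longrightarrow>
        is_sq BB \<beta> (vid BB (Fo (hdom AA a))) (Fh a) (Fh c) (vid BB (Fo (hcod AA a))) \<longrightarrow>
        (\<exists>!\<alpha>. is_sq AA \<alpha> (vid AA (hdom AA a)) a c (vid AA (hcod AA a)) \<and> Fs \<alpha> = \<beta>)"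
    and vb2: "\<forall>u\<in>Ver AA. \<forall>u'\<in>Ver AA. \<forall>b d \<beta>.
        is_sq BB \<beta> (Fv u) b d (Fv u') \<longrightarrow>
        (\<exists>a c \<alpha> \<psi>0 \<psi>1. is_sq AA \<alpha> u a c u'
            \<and> is_sq BB \<psi>0 (vid BB (Fo (vdom AA u))) b (Fh a) (vid BB (Fo (vdom AA u')))
            \<and> vert_invertible BB \<psi>0
            \<and> is_sq BB \<psi>1 (vid BB (Fo (vcod AA u))) d (Fh c) (vid BB (Fo (vcod AA u')))
            \<and> vert_invertible BB \<psi>1
            \<and> svcomp BB \<psi>0 (Fs \<alpha>) = svcomp BB \<beta> \<psi>1)"
    and vb3: "\<forall>u u' a c a' c' \<alpha> \<alpha>' \<tau>0 \<tau>1.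
        is_sq AA \<alpha> u a c u' \<longrightarrow> is_sq AA \<alpha>' u a' c' u' \<longrightarrow>
        is_sq BB \<tau>0 (vid BB (Fo (vdom AA u))) (Fh a) (Fh a') (vid BB (Fo (vdom AA u'))) \<longrightarrow>
        is_sq BB \<tau>1 (vid BB (Fo (vcod AA u))) (Fh c) (Fh c') (vid BB (Fo (vcod AA u'))) \<longrightarrow>
        svcomp BB \<tau>0 (Fs \<alpha>') = svcomp BB (Fs \<alpha>) \<tau>1 \<longrightarrow>
        (\<exists>!\<sigma>. is_sq AA (fst \<sigma>) (vid AA (vdom AA u)) a a' (vid AA (vdom AA u'))
            \<and> is_sq AA (snd \<sigma>) (vid AA (vcod AA u)) c c' (vid AA (vcod AA u'))
            \<and> Fs (fst \<sigma>) = \<tau>0 \<and> Fs (snd \<sigma>) = \<tau>1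
            \<and> svcomp AA (fst \<sigma>) \<alpha>' = svcomp AA \<alpha> (snd \<sigma>))"
  shows "\<forall>u\<in>Ver AA. \<forall>u'\<in>Ver AA. \<forall>a\<in>Hor AA. \<forall>c\<in>Hor AA. \<forall>\<beta>.
        hdom AA a = vdom AA u \<longrightarrow> hcod AA a = vdom AA u' \<longrightarrow>
        hdom AA c = vcod AA u \<longrightarrow> hcod AA c = vcod AA u' \<longrightarrow>
        is_sq BB \<beta> (Fv u) (Fh a) (Fh c) (Fv u') \<longrightarrow>
        (\<exists>!\<alpha>. is_sq AA \<alpha> u a c u' \<and> Fs \<alpha> = \<beta>)"
proof -
  have ff: "globular_fully_faithful AA BB Fo Fh Fv Fs"
    using hb3 unfolding globular_fully_faithful_def .
  have lift: "squares_lift_up_to_globular_iso AA BB Fo Fh Fv Fs"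
    using vb2 unfolding squares_lift_up_to_globular_iso_def .
  have cl: "globular_comparisons_lift AA BB Fo Fh Fv Fs"
    using vb3 unfolding globular_comparisons_lift_def .
  show ?thesis
  proof (intro ballI allI impI ex_ex1I)
    fix u u' a c \<beta>
    assume "u \<in> Ver AA" "u' \<in> Ver AA" "a \<in> Hor AA" "c \<in> Hor AA"
      "hdom AA a = vdom AA u" "hcod AA a = vdom AA u'" "hdom AA c = vcod AA u" "hcod AA c = vcod AA u'"
      "is_sq BB \<beta> (Fv u) (Fh a) (Fh c) (Fv u')"
    then show "\<exists>\<alpha>. is_sq AA \<alpha> u a c u' \<and> Fs \<alpha> = \<beta>"
      using square_lift_exists[OF dA dB F ff lift] by blast
  next
    fix u u' a c \<beta> \<alpha>1 \<alpha>2
    assume "is_sq AA \<alpha>1 u a c u' \<and> Fs \<alpha>1 = \<beta>" "is_sq AA \<alpha>2 u a c u' \<and> Fs \<alpha>2 = \<beta>"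
    then show "\<alpha>1 = \<alpha>2"
      using square_lift_unique[OF dA dB F ff cl] by blast
  qed
qed

end
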